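(* For every $n\ge1$, finite set $A$ and $g\in\mathscr G_n(A)$, the simplicial set $\Gamma_g=\{x\in\Gamma(A)\mid\gamma(x)\le g\}$ (a simplicial subset of $\Gamma_n(A)$) has contractible geometric realisation $|\Gamma_g|$.
   Context: For a finite set $A$, $\Gamma(A)$ is the simplicial set whose $k$-simplices are sequences $x=(L_0,\dots,L_k)$ of linear orders on $A$, faces deleting and degeneracies repeating entries. For $a\neq b$, $w_x(a,b)$ is $1$ plus the number of $1\le i\le k$ such that the relative order of $a,b$ differs between $L_{i-1}$ and $L_i$; $\Gamma_n(A)$ is the simplicial subset of simplices with all weights $\le n$. $\gamma(x)$ is the complete directed graph on $A$ with edge $a\to b$ iff $a<b$ in $L_0$, of weight $w_x(a,b)$. $\mathscr G_n(A)$ is the poset of acyclic complete directed graphs on $A$ with edge weights in $\{1,\dots,n\}$ (exactly one directed weighted edge per two-element subset), ordered by $g\le h$ iff whenever $a\xrightarrow{v}b$ in $g$, either $a\xrightarrow{w}b$ in $h$ with $v\le w$ or $b\xrightarrow{w}a$ in $h$ with $v<w$. *)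

theory Defs
  imports "HOL-Analysis.Analysis" "HOL-Homology.Homology"
begin

definition linord_on :: "'a set \<Rightarrow> 'a rel \<Rightarrow> bool" where
  "linord_on A L \<longleftrightarrow> linear_order_on A L \<and> L \<subseteq> A \<times> A"

text \<open>k-simplices of Gamma(A): sequences (L_0,...,L_k) of linear orders, represented as
  nonempty lists of length k+1. Faces delete, degeneracies repeat entries.\<close>
definition Gamma :: "'a set \<Rightarrow> 'a rel list set" where
  "Gamma A = {x. x \<noteq> [] \<and> (\<forall>L\<in>set x. linord_on A L)}"

definition wt :: "'a rel list \<Rightarrow> 'a \<Rightarrow> 'a \<Rightarrow> nat" where
  "wt x a b = 1 + card {i. 1 \<le> i \<and> i < length x \<and>
                        (((a, b) \<in> x ! (i - 1)) \<noteq> ((a, b) \<in> x ! i))}"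

text \<open>A weighted directed graph on A is encoded as g :: 'a => 'a => nat, where
  g a b > 0 means there is an edge a -> b of weight g a b, and g a b = 0 means no edge.\<close>
definition wgraph_edges :: "('a \<Rightarrow> 'a \<Rightarrow> nat) \<Rightarrow> 'a rel" where
  "wgraph_edges g = {(a, b). 0 < g a b}"

definition G :: "nat \<Rightarrow> 'a set \<Rightarrow> ('a \<Rightarrow> 'a \<Rightarrow> nat) set" where
  "G n A = {g. (\<forall>a b. 0 < g a b \<longrightarrow> a \<in> A \<and> b \<in> A \<and> a \<noteq> b \<and> g a b \<le> n)
             \<and> (\<forall>a\<in>A. \<forall>b\<in>A. a \<noteq> b \<longrightarrow> (0 < g a b \<longleftrightarrow> \<not> 0 < g b a))
             \<and> acyclic (wgraph_edges g)}"

definition graph_le :: "('a \<Rightarrow> 'a \<Rightarrow> nat) \<Rightarrow> ('a \<Rightarrow> 'a \<Rightarrow> nat) \<Rightarrow> bool" where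
  "graph_le g h \<longleftrightarrow> (\<forall>a b. 0 < g a b \<longrightarrow>
      ((0 < h a b \<and> g a b \<le> h a b) \<or> (0 < h b a \<and> g a b < h b a)))"

definition gamma :: "'a set \<Rightarrow> 'a rel list \<Rightarrow> 'a \<Rightarrow> 'a \<Rightarrow> nat" where
  "gamma A x a b = (if a \<in> A \<and> b \<in> A \<and> a \<noteq> b \<and> (a, b) \<in> x ! 0 then wt x a b else 0)"

definition Gamma_g :: "'a set \<Rightarrow> ('a \<Rightarrow> 'a \<Rightarrow> nat) \<Rightarrow> 'a rel list set" where
  "Gamma_g A g = {x \<in> Gamma A. graph_le (gamma A x) g}"

text \<open>A point of the realisation is represented canonically (Eilenberg-Zilber) as a
  nondegenerate simplex together with an interior point of its simplex: a list of pairs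
  (L_i, t_i) with t_i > 0, consecutive L_i distinct. The map pt x sends a point t of the
  standard k-simplex to this normal form of [x, t] (drop zero barycentric coordinates =
  taking a face, merge consecutive repeated orders = undoing a degeneracy).\<close>
fun merge_adj :: "('b \<times> real) list \<Rightarrow> ('b \<times> real) list" where
  "merge_adj [] = []"
| "merge_adj [p] = [p]"
| "merge_adj ((L, s) # (L', s') # ps) =
     (if L = L' then merge_adj ((L, s + s') # ps) else (L, s) # merge_adj ((L', s') # ps))"

definition pt :: "'b list \<Rightarrow> (nat \<Rightarrow> real) \<Rightarrow> ('b \<times> real) list" where
  "pt x t = merge_adj (filter (\<lambda>p. 0 < snd p) (map (\<lambda>i. (x ! i, t i)) [0..<length x]))"

definition simplex_top :: "nat \<Rightarrow> (nat \<Rightarrow> real) topology" where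
  "simplex_top k = subtopology (powertop_real UNIV) (standard_simplex k)"

definition realization_carrier :: "'b list set \<Rightarrow> ('b \<times> real) list set" where
  "realization_carrier X = (\<Union>x\<in>X. pt x ` standard_simplex (length x - 1))"

text \<open>Colimit (final) topology with respect to all characteristic maps Delta^k -> |X|.\<close>
definition realization :: "'b list set \<Rightarrow> ('b \<times> real) list topology" where
  "realization X = topology (\<lambda>U. U \<subseteq> realization_carrier X \<and>
      (\<forall>x\<in>X. openin (simplex_top (length x - 1))
                {t \<in> standard_simplex (length x - 1). pt x t \<in> U}))"

end

theory Submission
  imports Defs
begin

text \<open>
  Fix a linear order \<open>L\<close> on \<open>A\<close> extending the acyclic edge relation of \<open>g\<close>. Prepending
  \<open>L\<close> to a simplex \<open>x\<close> of \<open>\<Gamma>\<^sub>g\<close> stays in \<open>\<Gamma>\<^sub>g\<close>: an edge \<open>a \<rightarrow> b\<close> of \<open>\<gamma>(L # x)\<close> points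
  along \<open>L\<close>, so \<open>g\<close> has no edge \<open>b \<rightarrow> a\<close>; its weight is either the weight of \<open>a \<rightarrow> b\<close> in
  \<open>\<gamma>(x)\<close>, which \<open>\<gamma>(x) \<le> g\<close> bounds by \<open>g(a,b)\<close>, or one more than the weight of \<open>b \<rightarrow> a\<close> in
  \<open>\<gamma>(x)\<close>, which \<open>\<gamma>(x) \<le> g\<close> bounds strictly by \<open>g(a,b)\<close>. So \<open>\<Gamma>\<^sub>g\<close> is a cone with apex
  \<open>L\<close>, and sliding every point of \<open>|\<Gamma>\<^sub>g|\<close> linearly towards the vertex \<open>L\<close> contracts the
  realisation.
\<close>

section \<open>Linear extensions\<close>

lemma linord_on_lex_key:
  fixes r :: "'a \<Rightarrow> 'c::linorder" and f :: "'a \<Rightarrow> 'd::linorder"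
  assumes "inj_on f A"
  shows "linord_on A {(a, b). a \<in> A \<and> b \<in> A \<and> (r a < r b \<or> r a = r b \<and> f a \<le> f b)}"
  unfolding linord_on_def linear_order_on_def partial_order_on_def preorder_on_def
proof (intro conjI)
  show "antisym {(a, b). a \<in> A \<and> b \<in> A \<and> (r a < r b \<or> r a = r b \<and> f a \<le> f b)}"
    using assms by (auto simp: antisym_def inj_on_def)
qed (auto simp: refl_on_def trans_def total_on_def)

lemma card_trancl_predecessors_less:
  assumes "finite A" "acyclic E" "(a, b) \<in> E" "a \<in> A"
  shows "card {c \<in> A. (c, a) \<in> E\<^sup>+} < card {c \<in> A. (c, b) \<in> E\<^sup>+}"
proof (rule psubset_card_mono)
  show "{c \<in> A. (c, a) \<in> E\<^sup>+} \<subset> {c \<in> A. (c, b) \<in> E\<^sup>+}"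
    using assms(2-4) by (auto simp: acyclic_def intro: trancl_into_trancl)
qed (use assms(1) in auto)

lemma acyclic_imp_linord_extension:
  assumes fin: "finite A" and acyc: "acyclic E" and EA: "E \<subseteq> A \<times> A"
  obtains L where "linord_on A L" "E \<subseteq> L"
proof -
  obtain f :: "'a \<Rightarrow> nat" where "inj_on f A"
    using finite_imp_inj_to_nat_seg[OF fin] by blast
  define r where "r a = card {c \<in> A. (c, a) \<in> E\<^sup>+}" for a
  have "E \<subseteq> {(a, b). a \<in> A \<and> b \<in> A \<and> (r a < r b \<or> r a = r b \<and> f a \<le> f b)}"
    using EA card_trancl_predecessors_less[OF fin acyc] by (fastforce simp: r_def)
  with linord_on_lex_key[OF \<open>inj_on f A\<close>] that show ?thesis by blast
qed

section \<open>\<open>\<Gamma>\<^sub>g\<close> is a cone\<close>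

lemma G_acyclic: "g \<in> G n A \<Longrightarrow> acyclic (wgraph_edges g)"
  unfolding G_def by (elim CollectE conjE)

lemma G_wgraph_edges_subset:
  assumes "g \<in> G n A"
  shows "wgraph_edges g \<subseteq> A \<times> A"
proof -
  have "\<forall>a b. 0 < g a b \<longrightarrow> a \<in> A \<and> b \<in> A \<and> a \<noteq> b \<and> g a b \<le> n"
    using assms unfolding G_def by (elim CollectE conjE)
  then show ?thesis by (auto simp: wgraph_edges_def)
qed

lemma linord_on_mem_iff_not_swap:
  assumes "linord_on A L" "a \<in> A" "b \<in> A" "a \<noteq> b"
  shows "(a, b) \<in> L \<longleftrightarrow> (b, a) \<notin> L"
  using assms
  unfolding linord_on_def linear_order_on_def partial_order_on_def total_on_def antisym_def
  by blast

lemma wt_eq_sum: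
  "wt x a b = 1 + (\<Sum>i = 1..<length x. if ((a, b) \<in> x ! (i - 1)) \<noteq> ((a, b) \<in> x ! i) then 1 else 0)"
  unfolding wt_def by (simp add: sum.If_cases Int_def atLeastLessThan_def atLeast_def lessThan_def)

lemma wt_swap:
  assumes "\<forall>L\<in>set x. linord_on A L" "a \<in> A" "b \<in> A" "a \<noteq> b"
  shows "wt x b a = wt x a b"
  unfolding wt_eq_sum
proof (intro arg_cong[where f = "(+) 1"] sum.cong refl)
  fix i assume "i \<in> {1..<length x}"
  then have "linord_on A (x ! (i - 1))" "linord_on A (x ! i)" using assms(1) by auto
  then show "(if ((b, a) \<in> x ! (i - 1)) \<noteq> ((b, a) \<in> x ! i) then 1 else 0)
           = (if ((a, b) \<in> x ! (i - 1)) \<noteq> ((a, b) \<in> x ! i) then 1 else (0::nat))"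
    using linord_on_mem_iff_not_swap assms(2-4) by metis
qed

lemma wt_Cons:
  assumes "x \<noteq> []"
  shows "wt (L # x) a b = wt x a b + (if ((a, b) \<in> L) \<noteq> ((a, b) \<in> x ! 0) then 1 else 0)"
  using assms unfolding wt_eq_sum
  by (simp add: sum.atLeast_Suc_lessThan sum.shift_bounds_Suc_ivl del: sum.op_ivl_Suc)

lemma wt_pos [simp]: "0 < wt x a b"
  by (simp add: wt_def)

lemma gamma_pos_iff: "0 < gamma A x a b \<longleftrightarrow> a \<in> A \<and> b \<in> A \<and> a \<noteq> b \<and> (a, b) \<in> x ! 0"
  by (simp add: gamma_def)

lemma wt_Cons_le:
  assumes x: "x \<in> Gamma_g A g" and ab: "a \<in> A" "b \<in> A" "a \<noteq> b" "(a, b) \<in> L"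
    and no_back_edge: "g b a = 0"
  shows "wt (L # x) a b \<le> g a b"
proof -
  have ne: "x \<noteq> []" and lin: "\<forall>L\<in>set x. linord_on A L" and le: "graph_le (gamma A x) g"
    using x by (auto simp: Gamma_g_def Gamma_def)
  then have "linord_on A (x ! 0)" by simp
  then consider "(a, b) \<in> x ! 0" | "(b, a) \<in> x ! 0" "(a, b) \<notin> x ! 0"
    using linord_on_mem_iff_not_swap[OF _ ab(1-3)] by blast
  then show ?thesis
  proof cases
    case 1
    then have "0 < gamma A x a b" and gamma: "gamma A x a b = wt x a b"
      using ab by (auto simp: gamma_pos_iff gamma_def)
    with le have "0 < g a b \<and> gamma A x a b \<le> g a b \<or> 0 < g b a \<and> gamma A x a b < g b a"
      unfolding graph_le_def by blast
    with gamma no_back_edge have "wt x a b \<le> g a b" by simp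
    with 1 ab ne show ?thesis by (simp add: wt_Cons)
  next
    case 2
    then have "0 < gamma A x b a" and gamma: "gamma A x b a = wt x b a"
      using ab by (auto simp: gamma_pos_iff gamma_def)
    with le have "0 < g b a \<and> gamma A x b a \<le> g b a \<or> 0 < g a b \<and> gamma A x b a < g a b"
      unfolding graph_le_def by blast
    with gamma no_back_edge have "wt x b a < g a b" by simp
    with 2 ab ne wt_swap[OF lin ab(1-3)] show ?thesis by (simp add: wt_Cons)
  qed
qed

lemma Gamma_g_Cons:
  assumes L: "linord_on A L" "wgraph_edges g \<subseteq> L" and x: "x \<in> Gamma_g A g"
  shows "L # x \<in> Gamma_g A g"
proof -
  have "graph_le (gamma A (L # x)) g"
    unfolding graph_le_def
  proof (intro allI impI)
    fix a b assume "0 < gamma A (L # x) a b"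
    then have ab: "a \<in> A" "b \<in> A" "a \<noteq> b" "(a, b) \<in> L"
      by (simp_all add: gamma_pos_iff)
    have "(b, a) \<notin> L" using linord_on_mem_iff_not_swap[OF L(1) ab(1-3)] ab(4) by blast
    then have "g b a = 0" using L(2) by (auto simp: wgraph_edges_def)
    moreover have "gamma A (L # x) a b = wt (L # x) a b"
      using ab by (simp add: gamma_def)
    ultimately show "0 < g a b \<and> gamma A (L # x) a b \<le> g a b \<or>
                     0 < g b a \<and> gamma A (L # x) a b < g b a"
      using wt_Cons_le[OF x ab] wt_pos[of "L # x" a b] by linarith
  qed
  then show ?thesis using x L(1) by (simp add: Gamma_g_def Gamma_def)
qed

section \<open>Normal forms of points of the realisation\<close>

lemma fst_hd_merge_adj: "ps \<noteq> [] \<Longrightarrow> fst (hd (merge_adj ps)) = fst (hd ps)"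
  by (induction ps rule: merge_adj.induct) auto

lemma distinct_adj_merge_adj: "distinct_adj (map fst (merge_adj ps))"
proof (induction ps rule: merge_adj.induct)
  case (3 L s L' s' ps)
  then show ?case
    using fst_hd_merge_adj[of "(L', s') # ps"]
    by (cases "merge_adj ((L', s') # ps)") (auto simp: distinct_adj_Cons)
qed auto

lemma merge_adj_id: "distinct_adj (map fst ps) \<Longrightarrow> merge_adj ps = ps"
  by (induction ps rule: merge_adj.induct) auto

lemma merge_adj_idem [simp]: "merge_adj (merge_adj ps) = merge_adj ps"
  by (rule merge_adj_id[OF distinct_adj_merge_adj])

lemma merge_adj_pos: "\<forall>p\<in>set ps. 0 < snd p \<Longrightarrow> \<forall>p\<in>set (merge_adj ps). 0 < snd p"
  by (induction ps rule: merge_adj.induct) auto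

lemma merge_adj_map_scale:
  "merge_adj (map (apsnd ((*) c)) ps) = map (apsnd ((*) c)) (merge_adj ps)"
  by (induction ps rule: merge_adj.induct) (auto simp: distrib_left)

lemma merge_adj_Cons_merge_adj: "merge_adj (p # merge_adj qs) = merge_adj (p # qs)"
proof (induction qs arbitrary: p rule: merge_adj.induct)
  case (3 L1 s1 L2 s2 r)
  obtain L s where "p = (L, s)" by fastforce
  then show ?case using 3 by (cases "L = L1"; cases "L1 = L2") (auto simp: add.assoc)
qed auto

definition normal_form :: "('b \<times> real) list \<Rightarrow> ('b \<times> real) list" where
  "normal_form ps = merge_adj (filter (\<lambda>p. 0 < snd p) ps)"

lemma pt_eq_normal_form: "pt x t = normal_form (map (\<lambda>i. (x ! i, t i)) [0..<length x])"
  by (simp add: pt_def normal_form_def)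

lemma filter_pos_normal_form: "filter (\<lambda>p. 0 < snd p) (normal_form ps) = normal_form ps"
  unfolding filter_id_conv normal_form_def by (rule merge_adj_pos) auto

lemma normal_form_Cons_normal_form:
  "normal_form (p # normal_form ps) = normal_form (p # ps)"
proof -
  have "normal_form (p # normal_form ps)
      = merge_adj (if 0 < snd p then p # normal_form ps else normal_form ps)"
    by (simp only: normal_form_def[of "p # _"] filter.simps filter_pos_normal_form)
  also have "\<dots> = normal_form (p # ps)"
    by (simp add: normal_form_def merge_adj_Cons_merge_adj)
  finally show ?thesis .
qed

lemma normal_form_map_scale:
  assumes "0 < c"
  shows "normal_form (map (apsnd ((*) c)) ps) = map (apsnd ((*) c)) (normal_form ps)"
proof -
  have "filter (\<lambda>p. 0 < snd p) (map (apsnd ((*) c)) ps)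
      = map (apsnd ((*) c)) (filter (\<lambda>p. 0 < snd p) ps)"
    using assms by (induction ps) (auto simp: zero_less_mult_iff)
  then show ?thesis by (simp add: normal_form_def merge_adj_map_scale)
qed

lemma normal_form_Cons_scale_normal_form:
  assumes "0 \<le> c"
  shows "normal_form (p # map (apsnd ((*) c)) (normal_form ps))
       = normal_form (p # map (apsnd ((*) c)) ps)"
proof (cases "c = 0")
  case True
  then show ?thesis by (simp add: normal_form_def filter_empty_conv)
next
  case False
  with assms show ?thesis
    by (simp add: normal_form_map_scale[symmetric] normal_form_Cons_normal_form)
qed

lemma normal_form_idem: "normal_form (normal_form ps) = normal_form ps"
  by (metis filter_pos_normal_form merge_adj_idem normal_form_def)

lemma normal_form_pt [simp]: "normal_form (pt x t) = pt x t"
  by (simp add: pt_eq_normal_form normal_form_idem)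

definition cone_coords :: "real \<Rightarrow> (nat \<Rightarrow> real) \<Rightarrow> nat \<Rightarrow> real" where
  "cone_coords s t i = (if i = 0 then s else (1 - s) * t (i - 1))"

text \<open>
  The straight-line contraction of a point towards the vertex \<open>L\<close>, acting on normal forms
  directly so that no compatibility with the identifications of \<open>|X|\<close> has to be checked.
\<close>

definition cone_contraction :: "'b \<Rightarrow> real \<times> ('b \<times> real) list \<Rightarrow> ('b \<times> real) list" where
  "cone_contraction L z = normal_form ((L, fst z) # map (apsnd ((*) (1 - fst z))) (snd z))"

lemma cone_contraction_pt:
  assumes "s \<le> 1"
  shows "cone_contraction L (s, pt x t) = pt (L # x) (cone_coords s t)"
proof -
  have "map (\<lambda>i. ((L # x) ! i, cone_coords s t i)) [0..<length (L # x)]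
      = (L, s) # map (apsnd ((*) (1 - s))) (map (\<lambda>i. (x ! i, t i)) [0..<length x])"
    by (rule nth_equalityI) (auto simp del: upt_Suc simp: cone_coords_def nth_Cons')
  with assms show ?thesis
    by (simp add: cone_contraction_def pt_eq_normal_form normal_form_Cons_scale_normal_form)
qed

lemma cone_contraction_0 [simp]: "cone_contraction L (0, p) = normal_form p"
proof -
  have "map (apsnd ((*) 1)) p = p" by (induction p) auto
  then show ?thesis by (simp add: cone_contraction_def normal_form_def)
qed

lemma cone_contraction_1 [simp]: "cone_contraction L (1, p) = [(L, 1)]"
  by (simp add: cone_contraction_def normal_form_def filter_empty_conv)

lemma cone_coords_in_simplex:
  assumes t: "t \<in> standard_simplex k" and s: "s \<in> {0..1}"
  shows "cone_coords s t \<in> standard_simplex (Suc k)"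
proof -
  have t1: "\<And>i. 0 \<le> t i \<and> t i \<le> 1" "\<And>i. k < i \<Longrightarrow> t i = 0" "(\<Sum>i\<le>k. t i) = 1"
    using t by (auto simp: standard_simplex_def)
  have "0 \<le> cone_coords s t i \<and> cone_coords s t i \<le> 1" for i
  proof (cases "i = 0")
    case False
    have "(1 - s) * t (i - 1) \<le> 1 * 1" using s t1(1) by (intro mult_mono) auto
    then show ?thesis using False s t1(1) by (simp add: cone_coords_def)
  qed (use s in \<open>simp add: cone_coords_def\<close>)
  moreover have "(\<Sum>i\<le>Suc k. cone_coords s t i) = s + (1 - s) * (\<Sum>i\<le>k. t i)"
    by (simp only: sum.atMost_Suc_shift) (simp add: cone_coords_def sum_distrib_left)
  ultimately show ?thesis
    using t1(2,3) by (simp add: standard_simplex_def cone_coords_def)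
qed

section \<open>Topology of the realisation\<close>

lemma topspace_simplex_top [simp]: "topspace (simplex_top k) = standard_simplex k"
  by (simp add: simplex_top_def)

lemma continuous_map_simplex_coord:
  "continuous_map (simplex_top k) euclideanreal (\<lambda>t. t i)"
  unfolding simplex_top_def
  by (rule continuous_map_from_subtopology[OF continuous_map_product_projection]) simp

lemma continuous_map_cone_coords:
  "continuous_map (prod_topology (top_of_set {0..1::real}) (simplex_top k)) (simplex_top (Suc k))
     (\<lambda>z. cone_coords (fst z) (snd z))"
proof -
  have "continuous_map (prod_topology (top_of_set {0..1::real}) (simplex_top k)) euclideanreal
          (\<lambda>z. cone_coords (fst z) (snd z) i)" for i
    unfolding cone_coords_def
    by (auto intro!: continuous_map_real_mult continuous_map_diff
        continuous_map_into_fulltopology[OF continuous_map_fst]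
        continuous_map_compose[OF continuous_map_snd continuous_map_simplex_coord, unfolded o_def])
  then show ?thesis
    using cone_coords_in_simplex
    by (auto simp: simplex_top_def continuous_map_in_subtopology continuous_map_componentwise_UNIV)
qed

lemma istopology_realization:
  "istopology (\<lambda>U. U \<subseteq> realization_carrier X \<and>
      (\<forall>x\<in>X. openin (simplex_top (length x - 1))
                {t \<in> standard_simplex (length x - 1). pt x t \<in> U}))"
proof -
  have Int: "openin T {t \<in> A. f t \<in> U \<inter> V}"
    if "openin T {t \<in> A. f t \<in> U}" "openin T {t \<in> A. f t \<in> V}" for T A f U V
  proof -
    have "{t \<in> A. f t \<in> U \<inter> V} = {t \<in> A. f t \<in> U} \<inter> {t \<in> A. f t \<in> V}" by blast
    with openin_Int[OF that] show ?thesis by simp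
  qed
  have Union: "openin T {t \<in> A. f t \<in> \<Union>K}"
    if "\<forall>U\<in>K. openin T {t \<in> A. f t \<in> U}" for T A f K
  proof -
    have "{t \<in> A. f t \<in> \<Union>K} = (\<Union>U\<in>K. {t \<in> A. f t \<in> U})" by blast
    with that show ?thesis by (metis (no_types, lifting) imageE openin_Union)
  qed
  show ?thesis
    unfolding istopology_def by (blast intro: Int Union)
qed

lemma openin_realization:
  "openin (realization X) U \<longleftrightarrow> U \<subseteq> realization_carrier X \<and>
      (\<forall>x\<in>X. openin (simplex_top (length x - 1))
                {t \<in> standard_simplex (length x - 1). pt x t \<in> U})"
  unfolding realization_def topology_inverse'[OF istopology_realization] ..

lemma pt_in_realization_carrier:
  "x \<in> X \<Longrightarrow> t \<in> standard_simplex (length x - 1) \<Longrightarrow> pt x t \<in> realization_carrier X"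
  by (auto simp: realization_carrier_def)

lemma topspace_realization [simp]: "topspace (realization X) = realization_carrier X"
proof
  show "topspace (realization X) \<subseteq> realization_carrier X"
    using openin_realization[of X "topspace (realization X)"] by simp
  have "openin (realization X) (realization_carrier X)"
    unfolding openin_realization
  proof (intro conjI ballI order_refl)
    fix x assume "x \<in> X"
    then have "{t \<in> standard_simplex (length x - 1). pt x t \<in> realization_carrier X}
             = topspace (simplex_top (length x - 1))"
      using pt_in_realization_carrier by auto
    then show "openin (simplex_top (length x - 1))
                 {t \<in> standard_simplex (length x - 1). pt x t \<in> realization_carrier X}"
      by (metis openin_topspace)
  qed
  then show "realization_carrier X \<subseteq> topspace (realization X)"
    by (rule openin_subset)
qed

lemma openin_realization_tube:
  assumes N: "compactin (top_of_set {0..1::real}) N"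
    and W: "\<And>x. x \<in> X \<Longrightarrow> openin (prod_topology (top_of_set {0..1}) (simplex_top (length x - 1)))
                 {z \<in> {0..1} \<times> standard_simplex (length x - 1). (fst z, pt x (snd z)) \<in> W}"
  shows "openin (realization X) {p \<in> realization_carrier X. N \<times> {p} \<subseteq> W}"
  unfolding openin_realization
proof (intro conjI ballI)
  fix x assume x: "x \<in> X"
  define Wx where "Wx = {z \<in> {0..1} \<times> standard_simplex (length x - 1). (fst z, pt x (snd z)) \<in> W}"
  have N01: "N \<subseteq> {0..1}" using compactin_subset_topspace[OF N] by simp
  have pre: "{t \<in> standard_simplex (length x - 1). pt x t \<in> {p \<in> realization_carrier X. N \<times> {p} \<subseteq> W}}
           = {t \<in> standard_simplex (length x - 1). N \<times> {t} \<subseteq> Wx}"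
    using N01 pt_in_realization_carrier[OF x] by (auto simp: Wx_def)
  show "openin (simplex_top (length x - 1))
          {t \<in> standard_simplex (length x - 1). pt x t \<in> {p \<in> realization_carrier X. N \<times> {p} \<subseteq> W}}"
    unfolding pre openin_subopen[of _ "{t \<in> standard_simplex (length x - 1). N \<times> {t} \<subseteq> Wx}"]
  proof (intro ballI)
    fix t assume t: "t \<in> {t \<in> standard_simplex (length x - 1). N \<times> {t} \<subseteq> Wx}"
    have "\<exists>U V. openin (top_of_set {0..1}) U \<and> openin (simplex_top (length x - 1)) V \<and>
             N \<subseteq> U \<and> t \<in> V \<and> U \<times> V \<subseteq> Wx"
      using t by (intro tube_lemma_left[OF W[OF x, folded Wx_def] N]) auto
    then obtain U V where UV: "openin (simplex_top (length x - 1)) V" "N \<subseteq> U" "t \<in> V" "U \<times> V \<subseteq> Wx"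
      by blast
    then have "V \<subseteq> {t \<in> standard_simplex (length x - 1). N \<times> {t} \<subseteq> Wx}"
      using openin_subset[OF UV(1)] by auto
    with UV show "\<exists>T. openin (simplex_top (length x - 1)) T \<and> t \<in> T \<and>
                   T \<subseteq> {t \<in> standard_simplex (length x - 1). N \<times> {t} \<subseteq> Wx}"
      by blast
  qed
qed auto

text \<open>
  \<open>[0,1] \<times> |X|\<close> carries the colimit topology of the products \<open>[0,1] \<times> \<Delta>\<^sup>k\<close>; this rests on
  the local compactness of \<open>[0,1]\<close>, via the tube lemma.
\<close>

lemma openin_prod_realization:
  assumes W: "W \<subseteq> {0..1} \<times> realization_carrier X"
    and slices: "\<And>x. x \<in> X \<Longrightarrow> openin (prod_topology (top_of_set {0..1::real}) (simplex_top (length x - 1)))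
                 {z \<in> {0..1} \<times> standard_simplex (length x - 1). (fst z, pt x (snd z)) \<in> W}"
  shows "openin (prod_topology (top_of_set {0..1::real}) (realization X)) W"
  unfolding openin_subopen[of _ W]
proof
  fix z assume z: "z \<in> W"
  then obtain s0 x0 t0 where z0: "z = (s0, pt x0 t0)" "s0 \<in> {0..1}" and x0: "x0 \<in> X"
    and t0: "t0 \<in> standard_simplex (length x0 - 1)"
    using W by (auto simp: realization_carrier_def)
  have "continuous_map (top_of_set {0..1::real})
          (prod_topology (top_of_set {0..1::real}) (simplex_top (length x0 - 1))) (\<lambda>s. (s, t0))"
    using t0 by (auto intro!: continuous_map_pairedI simp: continuous_map_id[unfolded id_def])
  from openin_continuous_map_preimage[OF this slices[OF x0]]
  have "openin (top_of_set {0..1}) {s \<in> {0..1}. (s, pt x0 t0) \<in> W}"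
    by (rule back_subst[of "openin _"]) (use t0 in auto)
  then obtain e where e: "0 < e" "\<And>s. s \<in> {0..1} \<Longrightarrow> dist s s0 < e \<Longrightarrow> (s, pt x0 t0) \<in> W"
    using z z0 unfolding openin_euclidean_subtopology_iff by force
  define V where "V = {p \<in> realization_carrier X. ({0..1} \<inter> cball s0 (e / 2)) \<times> {p} \<subseteq> W}"
  have "compactin (top_of_set {0..1::real}) ({0..1} \<inter> cball s0 (e / 2))"
    by (auto simp: compactin_subtopology intro: compact_Int_closed)
  then have "openin (realization X) V"
    unfolding V_def by (rule openin_realization_tube[OF _ slices])
  then have "openin (prod_topology (top_of_set {0..1::real}) (realization X)) (({0..1} \<inter> ball s0 (e / 2)) \<times> V)"
    by (simp add: openin_prod_Times_iff openin_open_Int)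
  moreover have "z \<in> ({0..1} \<inter> ball s0 (e / 2)) \<times> V"
    using z0 e x0 t0 pt_in_realization_carrier[OF x0 t0] by (auto simp: V_def dist_commute)
  moreover have "({0..1} \<inter> ball s0 (e / 2)) \<times> V \<subseteq> W"
    using e(1) by (auto simp: V_def)
  ultimately show "\<exists>T. openin (prod_topology (top_of_set {0..1}) (realization X)) T \<and> z \<in> T \<and> T \<subseteq> W"
    by blast
qed

section \<open>Realisations of cones are contractible\<close>

lemma continuous_map_pt:
  assumes "x \<in> X"
  shows "continuous_map (simplex_top (length x - 1)) (realization X) (pt x)"
  using assms pt_in_realization_carrier[OF assms]
  by (auto simp: continuous_map_def openin_realization)

lemma continuous_map_prod_realization:
  assumes "\<And>x. x \<in> X \<Longrightarrow> continuous_map (prod_topology (top_of_set {0..1::real}) (simplex_top (length x - 1)))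
                             Y (\<lambda>z. f (fst z, pt x (snd z)))"
  shows "continuous_map (prod_topology (top_of_set {0..1::real}) (realization X)) Y f"
  unfolding continuous_map_def
proof (intro conjI allI impI)
  show "f \<in> topspace (prod_topology (top_of_set {0..1}) (realization X)) \<rightarrow> topspace Y"
  proof
    fix z assume "z \<in> topspace (prod_topology (top_of_set {0..1::real}) (realization X))"
    then obtain s x t where z: "z = (s, pt x t)" "s \<in> {0..1}" and x: "x \<in> X"
      and t: "t \<in> standard_simplex (length x - 1)"
      by (auto simp: realization_carrier_def)
    have "(s, t) \<in> topspace (prod_topology (top_of_set {0..1}) (simplex_top (length x - 1)))"
      using z t by simp
    from funcset_mem[OF continuous_map_funspace[OF assms[OF x]] this]
    show "f z \<in> topspace Y" using z by simp
  qed
  fix U assume U: "openin Y U"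
  show "openin (prod_topology (top_of_set {0..1}) (realization X))
          {z \<in> topspace (prod_topology (top_of_set {0..1}) (realization X)). f z \<in> U}"
  proof (rule openin_prod_realization)
    fix x assume x: "x \<in> X"
    have "{z \<in> {0..1} \<times> standard_simplex (length x - 1).
            (fst z, pt x (snd z)) \<in> {z \<in> topspace (prod_topology (top_of_set {0..1}) (realization X)). f z \<in> U}}
        = {z \<in> topspace (prod_topology (top_of_set {0..1}) (simplex_top (length x - 1))).
            f (fst z, pt x (snd z)) \<in> U}"
      using pt_in_realization_carrier[OF x] by auto
    then show "openin (prod_topology (top_of_set {0..1}) (simplex_top (length x - 1)))
          {z \<in> {0..1} \<times> standard_simplex (length x - 1).
            (fst z, pt x (snd z)) \<in> {z \<in> topspace (prod_topology (top_of_set {0..1}) (realization X)). f z \<in> U}}"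
      using openin_continuous_map_preimage[OF assms[OF x] U] by simp
  qed auto
qed

lemma continuous_map_cone_contraction:
  assumes "\<And>x. x \<in> X \<Longrightarrow> x \<noteq> [] \<and> L # x \<in> X"
  shows "continuous_map (prod_topology (top_of_set {0..1::real}) (realization X)) (realization X)
           (cone_contraction L)"
proof (rule continuous_map_prod_realization)
  fix x assume x: "x \<in> X"
  then have Lx: "L # x \<in> X" and len: "length (L # x) - 1 = Suc (length x - 1)"
    using assms by auto
  have "continuous_map (prod_topology (top_of_set {0..1::real}) (simplex_top (length x - 1)))
               (realization X) (pt (L # x) \<circ> (\<lambda>z. cone_coords (fst z) (snd z)))"
    using continuous_map_compose[OF continuous_map_cone_coords continuous_map_pt[OF Lx, unfolded len]] .
  then show "continuous_map (prod_topology (top_of_set {0..1::real}) (simplex_top (length x - 1)))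
               (realization X) (\<lambda>z. cone_contraction L (fst z, pt x (snd z)))"
    by (rule continuous_map_eq) (auto simp: cone_contraction_pt)
qed

lemma contractible_space_realization_cone:
  assumes "\<And>x. x \<in> X \<Longrightarrow> x \<noteq> [] \<and> L # x \<in> X"
  shows "contractible_space (realization X)"
proof -
  have "homotopic_with (\<lambda>_. True) (realization X) (realization X) normal_form (\<lambda>_. [(L, 1)])"
    unfolding homotopic_with_def
    by (intro exI[of _ "cone_contraction L"]) (simp add: continuous_map_cone_contraction[OF assms])
  then have "homotopic_with (\<lambda>_. True) (realization X) (realization X) id (\<lambda>_. [(L, 1)])"
    by (rule homotopic_with_eq) (auto simp: realization_carrier_def)
  then show ?thesis
    unfolding contractible_space_def by blast
qed

theorem lemma6:
  fixes A :: "'a set" and n :: nat and g :: "'a \<Rightarrow> 'a \<Rightarrow> nat"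
  assumes "1 \<le> n" and "finite A" and "g \<in> G n A"
  shows "contractible_space (realization (Gamma_g A g))"
proof -
  obtain L where L: "linord_on A L" "wgraph_edges g \<subseteq> L"
    using acyclic_imp_linord_extension[OF assms(2) G_acyclic G_wgraph_edges_subset] assms(3) by blast
  have "x \<noteq> [] \<and> L # x \<in> Gamma_g A g" if "x \<in> Gamma_g A g" for x
    using that Gamma_g_Cons[OF L] by (auto simp: Gamma_g_def Gamma_def)
  then show ?thesis
    by (rule contractible_space_realization_cone)
qed

end
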